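(* Let $m$ and $K\ge0$ be integers with $2^K<m\le 2^{K+1}$, and let $n\ge0$ be an integer. Then the integer $$\prod_{j=1}^{m-1}\prod_{i=1}^{j}\frac{2n+i+j}{i+j}$$ is odd if and only if $n\equiv0\pmod{2^{K+1}}$ or $n\equiv -m\pmod{2^{K+1}}$.
   Context: This product equals the Hankel determinant $\det\left(C_{i+j+m}\right)_{i,j=0}^{n-1}$ of the Catalan numbers $C_k=\frac{1}{k+1}\binom{2k}{k}$, in particular it is an integer. *)

theory Defs
  imports Complex_Main "HOL-Number_Theory.Cong"
begin

definition catalan_hankel_prod :: "nat \<Rightarrow> nat \<Rightarrow> rat" where
  "catalan_hankel_prod m n =
     (\<Prod>j\<in>{1..<m}. \<Prod>i\<in>{1..j}. (of_nat (2*n + i + j) / of_nat (i + j)))"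

end

theory Submission
  imports Defs
begin

(* Write the product as A / B, where A = prod (2n+i+j) and B is the same product at n = 0.
   Counting multiples of p^k among the factors gives v_p(A) - v_p(B) = sum_k S(p^k, m-1, n), where
   S(q, L, n) = defect_sum q L n is the sum over 1 <= j <= L of
   floor((2n+2j)/q) + floor(j/q) - floor((2n+j)/q) - floor(2j/q).
   S is q-periodic in L and in n, and on the fundamental domain it is an explicit piecewise linear
   expression, which is nonnegative; so B divides A, and A / B is odd iff S(2^k, m-1, n) = 0 for all k.
   If 2^(K+1) divides n or n+m, these all vanish: for 2^k dividing 2^(K+1) by periodicity, and for
   2^k = 2h with 2^(K+1) dividing h because S(2h, L, n) = 0 iff n mod h + L < h. Otherwise the
   modulus 2^(K+1) or 2^(K+2) gives a nonzero term. *)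

lemma sum_lessThan_div_shift:
  assumes "0 < (q::nat)"
  shows "(\<Sum>i<q. (x + i) div q) = x"
proof (induction x)
  case 0
  show ?case by simp
next
  case (Suc x)
  obtain q' where q: "q = Suc q'" using assms by (cases q) auto
  let ?f = "\<lambda>i. (x + i) div q"
  have "(\<Sum>i<q. (Suc x + i) div q) = (\<Sum>i<q'. ?f (Suc i)) + ?f q"
    using q by simp
  also have "?f q = ?f 0 + 1"
    using assms by simp
  also have "(\<Sum>i<q'. ?f (Suc i)) + (?f 0 + 1) = (\<Sum>i<q. ?f i) + 1"
    unfolding q sum.lessThan_Suc_shift by simp
  finally show ?case
    using Suc by simp
qed

lemma div_double_eq:
  assumes "0 < (q::nat)"
  shows "(2 * y) div q = y div q + (y + q div 2) div q"
proof -
  define r where "r = y mod q"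
  have y: "y = r + (y div q) * q" and r: "r < q"
    using assms by (simp_all add: r_def)
  have "(2 * y) div q = 2 * (y div q) + (2 * r) div q"
    using assms by (subst y) (simp add: algebra_simps)
  moreover have "(y + q div 2) div q = y div q + (r + q div 2) div q"
    using assms by (subst y) (simp add: add.assoc[symmetric] add.commute[of _ "q div 2"])
  moreover have "(2 * r) div q = (r + q div 2) div q"
    using r by (cases "2 * r < q") (auto simp: div_less le_div_geq div_eq_0_iff)
  ultimately show ?thesis by simp
qed

lemma periodic_eq_mod:
  assumes "\<And>x. f (x + q) = f (x::nat)"
  shows "f x = f (x mod q)"
proof -
  have "f (r + q * c) = f r" for r c
    using assms[of "r + q * _"] by (induction c) (simp_all add: algebra_simps)
  from this[of "x mod q" "x div q"] show ?thesis by simp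
qed

(* By the counting lemma sum_dvd_indicator_eq_div_diff, defect q n j is the number of i in {1..j}
   with q dividing 2n+i+j minus the number with q dividing i+j. *)
definition defect :: "nat \<Rightarrow> nat \<Rightarrow> nat \<Rightarrow> int" where
  "defect q n j = int ((2*n + 2*j) div q) + int (j div q) - int ((2*n + j) div q) - int ((2*j) div q)"

definition defect_sum :: "nat \<Rightarrow> nat \<Rightarrow> nat \<Rightarrow> int" where
  "defect_sum q L n = (\<Sum>j=1..L. defect q n j)"

lemma defect_eq_half_shift:
  assumes "0 < q"
  shows "defect q n j = int ((n + j) div q) + int ((n + q div 2 + j) div q)
    - int ((2*n + j) div q) - int ((q div 2 + j) div q)"
  using div_double_eq[OF assms, of "n + j"] div_double_eq[OF assms, of j]
  by (simp add: defect_def algebra_simps)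

lemma defect_sum_mod_right:
  assumes "0 < q"
  shows "defect_sum q L n = defect_sum q L (n mod q)"
proof (rule periodic_eq_mod)
  have "defect q (n + q) j = defect q n j" for n j
  proof -
    have "2 * (n + q) + k = (2 * n + k) + 2 * q" for k
      by simp
    then show ?thesis
      using assms by (simp only: defect_def div_mult_self2) simp
  qed
  then show "defect_sum q L (n + q) = defect_sum q L n" for n
    by (simp add: defect_sum_def)
qed

lemma sum_defect_window:
  assumes "0 < q"
  shows "(\<Sum>i<q. defect q n (L + 1 + i)) = 0"
proof -
  have "(\<Sum>i<q. defect q n (L + 1 + i)) =
      (\<Sum>i<q. int ((n + L + 1 + i) div q)) + (\<Sum>i<q. int ((n + q div 2 + L + 1 + i) div q))
    - (\<Sum>i<q. int ((2*n + L + 1 + i) div q)) - (\<Sum>i<q. int ((q div 2 + L + 1 + i) div q))"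
    by (simp only: defect_eq_half_shift[OF assms] sum.distrib sum_subtractf) (simp add: algebra_simps)
  also have "\<dots> = 0"
    unfolding of_nat_sum[symmetric] sum_lessThan_div_shift[OF assms] by simp
  finally show ?thesis .
qed

lemma defect_sum_add_length:
  "defect_sum q (L + k) n = defect_sum q L n + (\<Sum>i<k. defect q n (L + 1 + i))"
  by (induction k) (simp_all add: defect_sum_def)

lemma defect_sum_mod_left:
  assumes "0 < q"
  shows "defect_sum q L n = defect_sum q (L mod q) n"
proof (rule periodic_eq_mod[where f = "\<lambda>L. defect_sum q L n"])
  show "defect_sum q (L + q) n = defect_sum q L n" for L
    using defect_sum_add_length[of q L q n] sum_defect_window[OF assms, of n L] by simp
qed

lemma defect_sum_mod:
  assumes "0 < q"
  shows "defect_sum q L n = defect_sum q (L mod q) (n mod q)"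
  using defect_sum_mod_left[OF assms] defect_sum_mod_right[OF assms] by metis

lemma sum_div_eq_clamp:
  assumes "0 < q" "x + L < 3 * q"
  shows "(\<Sum>j=1..L. int ((x + j) div q)) =
    max 0 (min (int L) (int x + int L + 1 - int q)) + max 0 (min (int L) (int x + int L + 1 - 2 * int q))"
  using assms(2)
proof (induction L)
  case (Suc L)
  have "int ((x + Suc L) div q) = (if x + Suc L < q then 0 else if x + Suc L < 2*q then 1 else 2)"
    using assms(1) Suc.prems
    by (auto simp: div_eq_0_iff intro!: div_nat_eqI)
  then show ?case
    using Suc by (auto simp: max_def min_def)
qed simp

definition defect_sum_piecewise :: "int \<Rightarrow> int \<Rightarrow> int \<Rightarrow> int \<Rightarrow> int" where
  "defect_sum_piecewise q s L n =
     max 0 (n + L + 1 - q) + min L (max 0 (n + s + L + 1 - q)) + max 0 (n + s + L + 1 - 2*q)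
   - min L (max 0 (2*n + L + 1 - q)) - max 0 (2*n + L + 1 - 2*q) - max 0 (s + L + 1 - q)"

lemma defect_sum_eq_piecewise:
  assumes "0 < q" "L < q" "n < q"
  shows "defect_sum q L n = defect_sum_piecewise (int q) (int (q div 2)) (int L) (int n)"
proof -
  define s where "s = q div 2"
  have s: "s < q" "q \<le> 2 * s + 1"
    using assms(1) by (simp_all add: s_def)
  have "defect_sum q L n =
      (\<Sum>j=1..L. int ((n + j) div q)) + (\<Sum>j=1..L. int ((n + s + j) div q))
    - (\<Sum>j=1..L. int ((2*n + j) div q)) - (\<Sum>j=1..L. int ((s + j) div q))"
    by (simp add: defect_sum_def defect_eq_half_shift[OF assms(1)] sum.distrib sum_subtractf s_def)
  also have "(\<Sum>j=1..L. int ((n + j) div q)) = max 0 (int n + int L + 1 - int q)"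
    using assms by (subst sum_div_eq_clamp) auto
  also have "(\<Sum>j=1..L. int ((n + s + j) div q)) =
      min (int L) (max 0 (int n + int s + int L + 1 - int q)) + max 0 (int n + int s + int L + 1 - 2 * int q)"
    using assms s by (subst sum_div_eq_clamp) auto
  also have "(\<Sum>j=1..L. int ((2*n + j) div q)) =
      min (int L) (max 0 (2 * int n + int L + 1 - int q)) + max 0 (2 * int n + int L + 1 - 2 * int q)"
    using assms by (subst sum_div_eq_clamp) auto
  also have "(\<Sum>j=1..L. int ((s + j) div q)) = max 0 (int s + int L + 1 - int q)"
    using assms s by (subst sum_div_eq_clamp) auto
  finally show ?thesis
    by (simp add: defect_sum_piecewise_def s_def)
qed

lemma defect_sum_reduced:
  assumes "0 < q"
  obtains s where "int q = 2 * s \<or> int q = 2 * s + 1"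
    and "defect_sum q L n = defect_sum_piecewise (int q) s (int (L mod q)) (int (n mod q))"
proof
  show "int q = 2 * int (q div 2) \<or> int q = 2 * int (q div 2) + 1"
    by linarith
  show "defect_sum q L n = defect_sum_piecewise (int q) (int (q div 2)) (int (L mod q)) (int (n mod q))"
    using assms by (subst defect_sum_mod[OF assms]) (simp add: defect_sum_eq_piecewise)
qed

lemma defect_sum_piecewise_nonneg:
  "0 \<le> L \<Longrightarrow> L < q \<Longrightarrow> 0 \<le> n \<Longrightarrow> n < q \<Longrightarrow> q = 2*s \<or> q = 2*s + 1 \<Longrightarrow>
    0 \<le> defect_sum_piecewise q s L n"
  unfolding defect_sum_piecewise_def max_def min_def by (smt (verit))

lemma defect_sum_piecewise_eq_0:
  "0 \<le> L \<Longrightarrow> 0 \<le> n \<Longrightarrow> n + L + 1 = q \<Longrightarrow> q = 2*s \<or> q = 2*s + 1 \<Longrightarrow>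
    defect_sum_piecewise q s L n = 0"
  unfolding defect_sum_piecewise_def max_def min_def by (smt (verit))

lemma defect_sum_nonneg:
  assumes "0 < q"
  shows "0 \<le> defect_sum q L n"
proof -
  obtain s where "int q = 2 * s \<or> int q = 2 * s + 1"
    and "defect_sum q L n = defect_sum_piecewise (int q) s (int (L mod q)) (int (n mod q))"
    using defect_sum_reduced[OF assms] .
  moreover have "L mod q < q" "n mod q < q"
    using assms by simp_all
  ultimately show ?thesis
    by (simp add: defect_sum_piecewise_nonneg)
qed

lemma defect_sum_eq_0_if_dvd_start:
  assumes "0 < q" "q dvd n"
  shows "defect_sum q L n = 0"
  using assms by (subst defect_sum_mod_right) (simp_all add: defect_sum_def defect_def)

lemma defect_sum_eq_0_if_dvd_end:
  assumes "0 < q" "q dvd n + L + 1"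
  shows "defect_sum q L n = 0"
proof -
  obtain s where "int q = 2 * s \<or> int q = 2 * s + 1"
    and "defect_sum q L n = defect_sum_piecewise (int q) s (int (L mod q)) (int (n mod q))"
    using defect_sum_reduced[OF assms(1)] .
  moreover have "n mod q + L mod q + 1 = q"
  proof -
    have "(n mod q + L mod q + 1) mod q = ((n mod q + L mod q) mod q + 1) mod q"
      by (rule mod_add_left_eq[symmetric])
    also have "\<dots> = (n + L + 1) mod q"
      by (simp only: mod_add_eq) (rule mod_add_left_eq)
    finally have "q dvd n mod q + L mod q + 1"
      using assms(2) by (simp add: dvd_eq_mod_eq_0)
    then obtain c where c: "n mod q + L mod q + 1 = q * c"
      by blast
    have "q * c < q * 2"
      using assms(1) mod_less_divisor[of q n] mod_less_divisor[of q L] c by linarith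
    moreover have "c \<noteq> 0"
      using c by (metis add_eq_0_iff_both_eq_0 mult_0_right one_neq_zero)
    ultimately have "c = 1"
      by simp
    with c show ?thesis
      by simp
  qed
  ultimately show ?thesis
    by (simp add: defect_sum_piecewise_eq_0)
qed

lemma defect_sum_piecewise_double_eq_0_iff:
  "0 \<le> L \<Longrightarrow> L < h \<Longrightarrow> 0 \<le> n \<Longrightarrow> n < 2*h \<Longrightarrow>
    defect_sum_piecewise (2*h) h L n = 0 \<longleftrightarrow> n + L < h \<or> (h \<le> n \<and> n + L < 2*h)"
  unfolding defect_sum_piecewise_def max_def min_def by (smt (verit))

lemma defect_sum_piecewise_double_pos:
  "h \<le> L \<Longrightarrow> L < 2*h \<Longrightarrow> 0 < n \<Longrightarrow> n + L + 1 < 2*h \<Longrightarrow>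
    0 < defect_sum_piecewise (2*h) h L n"
  unfolding defect_sum_piecewise_def max_def min_def by (smt (verit))

lemma defect_sum_double_eq_piecewise:
  assumes "0 < h" "L < 2*h"
  shows "defect_sum (2*h) L n = defect_sum_piecewise (2 * int h) (int h) (int L) (int (n mod (2*h)))"
  using assms by (subst defect_sum_mod_right) (simp_all add: defect_sum_eq_piecewise)

lemma defect_sum_double_eq_0_iff:
  assumes "0 < h" "L < h"
  shows "defect_sum (2*h) L n = 0 \<longleftrightarrow> n mod h + L < h"
proof -
  define r where "r = n mod (2*h)"
  have r: "r < 2*h"
    using assms(1) by (simp add: r_def)
  have "n mod h = r mod h"
    unfolding r_def by (simp add: mod_mod_cancel)
  also have "\<dots> = (if r < h then r else r - h)"
    using r by (simp add: le_mod_geq)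
  finally have "n mod h = (if r < h then r else r - h)" .
  then have "n mod h + L < h \<longleftrightarrow> r + L < h \<or> (h \<le> r \<and> r + L < 2*h)"
    by auto
  moreover have "defect_sum (2*h) L n = defect_sum_piecewise (2 * int h) (int h) (int L) (int r)"
    using assms by (simp add: defect_sum_double_eq_piecewise r_def)
  moreover have "defect_sum_piecewise (2 * int h) (int h) (int L) (int r) = 0 \<longleftrightarrow>
      r + L < h \<or> (h \<le> r \<and> r + L < 2*h)"
    using assms r defect_sum_piecewise_double_eq_0_iff[of "int L" "int h" "int r"] by (simp; linarith)
  ultimately show ?thesis
    by simp
qed

lemma defect_sum_double_pos:
  assumes "h \<le> L" "L < 2*h" "0 < n mod (2*h)" "n mod (2*h) + L + 1 < 2*h"
  shows "0 < defect_sum (2*h) L n"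
  using assms defect_sum_piecewise_double_pos[of "int h" "int L" "int (n mod (2*h))"]
  by (simp add: defect_sum_double_eq_piecewise)

lemma dvd_less_imp_add_le:
  fixes d a b :: nat
  assumes "d dvd a" "d dvd b" "a < b"
  shows "a + d \<le> b"
proof -
  have "d \<le> b - a"
    using assms by (intro dvd_imp_le dvd_diff_nat) auto
  then show ?thesis
    using assms(3) by simp
qed

lemma defect_sum_eq_0_if_dvd_divisor:
  assumes "0 < d" "d dvd q" "0 < m" "q dvd n \<or> q dvd n + m"
  shows "defect_sum d (m - 1) n = 0"
  using assms(4)
proof
  assume "q dvd n"
  then show ?thesis
    using assms(1,2) by (intro defect_sum_eq_0_if_dvd_start) (auto intro: dvd_trans)
next
  assume "q dvd n + m"
  then have "d dvd n + (m - 1) + 1"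
    using assms(2,3) by (auto intro: dvd_trans)
  then show ?thesis
    by (rule defect_sum_eq_0_if_dvd_end[OF assms(1)])
qed

lemma defect_sum_eq_0_if_dvd_multiple:
  assumes "0 < h" "q dvd h" "0 < m" "m \<le> q" "q dvd n \<or> q dvd n + m"
  shows "defect_sum (2*h) (m - 1) n = 0"
proof -
  have "n mod h + m \<le> h"
    using assms(5)
  proof
    assume "q dvd n"
    then have "q dvd n mod h"
      using assms(2) by (simp add: mod_mod_cancel dvd_mod)
    then have "n mod h + q \<le> h"
      using assms(1,2) by (intro dvd_less_imp_add_le) simp_all
    then show ?thesis
      using assms(4) by simp
  next
    assume "q dvd n + m"
    then have "q dvd n mod h + m"
      using assms(2) by (metis dvd_mod mod_add_left_eq dvd_mod_iff)
    show ?thesis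
    proof (rule ccontr)
      assume "\<not> n mod h + m \<le> h"
      then have "h + q \<le> n mod h + m"
        using assms(2) \<open>q dvd n mod h + m\<close> by (intro dvd_less_imp_add_le) simp_all
      then show False
        using assms(1,4) mod_less_divisor[of h n] by linarith
    qed
  qed
  then show ?thesis
    using assms(1,3) by (subst defect_sum_double_eq_0_iff) simp_all
qed

lemma defect_sum_ne_0_if_not_dvd:
  assumes "2^K < m" "m \<le> 2^(K+1)" "\<not> (2^(K+1) dvd n \<or> 2^(K+1) dvd n + m)"
  shows "defect_sum (2^(K+1)) (m - 1) n \<noteq> 0 \<or> defect_sum (2^(K+2)) (m - 1) n \<noteq> 0"
proof -
  define q :: nat where "q = 2^(K+1)"
  define r where "r = n mod q"
  have q: "0 < q" "q = 2 * 2^K"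
    by (simp_all add: q_def)
  have "0 < r"
    using assms(3) by (simp add: r_def q_def dvd_eq_mod_eq_0)
  moreover have "r + m \<noteq> q"
  proof
    assume "r + m = q"
    then have "(n + m) mod q = 0"
      using mod_add_left_eq[of n q m] by (simp add: r_def)
    with assms(3) show False
      by (simp add: q_def dvd_eq_mod_eq_0)
  qed
  moreover have "r < q"
    using q by (simp add: r_def)
  ultimately consider "r + m < q" | "q < r + m"
    by linarith
  then show ?thesis
  proof cases
    case 1
    then have "0 < defect_sum (2 * 2^K) (m - 1) n"
      using assms(1,2) \<open>0 < r\<close> by (intro defect_sum_double_pos) (simp_all add: r_def q)
    then show ?thesis
      by simp
  next
    case 2
    then have "defect_sum (2 * q) (m - 1) n \<noteq> 0"
      using assms(1,2) q by (subst defect_sum_double_eq_0_iff) (simp_all add: r_def q_def)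
    then show ?thesis
      by (simp add: q_def)
  qed
qed

lemma defect_sums_pow2_eq_0_iff:
  assumes "2^K < m" "m \<le> 2^(K+1)" "K + 2 \<le> N"
  shows "(\<forall>k\<in>{1..N}. defect_sum (2^k) (m - 1) n = 0) \<longleftrightarrow> 2^(K+1) dvd n \<or> 2^(K+1) dvd n + m"
proof
  assume "\<forall>k\<in>{1..N}. defect_sum (2^k) (m - 1) n = 0"
  moreover have "K + 1 \<in> {1..N}" "K + 2 \<in> {1..N}"
    using assms(3) by simp_all
  ultimately have "defect_sum (2^(K+1)) (m - 1) n = 0" "defect_sum (2^(K+2)) (m - 1) n = 0"
    by blast+
  then show "2^(K+1) dvd n \<or> 2^(K+1) dvd n + m"
    using defect_sum_ne_0_if_not_dvd[OF assms(1,2), of n] by blast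
next
  assume dvd: "2^(K+1) dvd n \<or> 2^(K+1) dvd n + m"
  have "0 < m"
    using assms(1) by linarith
  have "defect_sum (2^k) (m - 1) n = 0" if "1 \<le> k" for k
  proof (cases "k \<le> K + 1")
    case True
    then have "(2::nat)^k dvd 2^(K+1)"
      by (rule le_imp_power_dvd)
    then show ?thesis
      using \<open>0 < m\<close> dvd by (intro defect_sum_eq_0_if_dvd_divisor) simp_all
  next
    case False
    then have "(2::nat)^k = 2 * 2^(k-1)" and "(2::nat)^(K+1) dvd 2^(k-1)"
      using that by (simp_all add: le_imp_power_dvd flip: power_Suc)
    then show ?thesis
      using \<open>0 < m\<close> assms(2) dvd by (simp only:) (rule defect_sum_eq_0_if_dvd_multiple; simp)
  qed
  then show "\<forall>k\<in>{1..N}. defect_sum (2^k) (m - 1) n = 0"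
    by simp
qed

lemma sum_dvd_indicator_eq_div_diff:
  assumes "0 < q"
  shows "(\<Sum>i\<in>{1..j}. if q dvd c + i then 1 else 0 :: int) = int ((c + j) div q) - int (c div q)"
proof (induction j)
  case (Suc j)
  have "(c + Suc j) div q = (c + j) div q + (if q dvd Suc (c + j) then 1 else 0)"
    using div_Suc[of "c + j" q] by (auto simp: dvd_eq_mod_eq_0)
  then show ?case
    using Suc by simp
qed simp

lemma multiplicity_eq_sum_pow_dvd:
  assumes "prime (p::nat)" "0 < x" "x \<le> N"
  shows "int (multiplicity p x) = (\<Sum>k\<in>{1..N}. if p^k dvd x then 1 else 0)"
proof -
  let ?M = "multiplicity p x"
  have "?M < p ^ ?M"
    using prime_gt_1_nat[OF assms(1)] by (simp add: power_gt_expt)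
  also have "p ^ ?M \<le> x"
    using assms(2) by (intro dvd_imp_le multiplicity_dvd)
  finally have "?M \<le> N"
    using assms(3) by simp
  have "(\<Sum>k\<in>{1..N}. if p^k dvd x then 1 else 0 :: int) = (\<Sum>k\<in>{1..N}. if k \<le> ?M then 1 else 0)"
    using assms(1,2) power_dvd_iff_le_multiplicity[of x p] by (simp add: prime_nat_iff)
  also have "\<dots> = (\<Sum>k\<in>{k\<in>{1..N}. k \<le> ?M}. 1)"
    by (rule sum.inter_filter[symmetric]) simp
  also have "{k\<in>{1..N}. k \<le> ?M} = {1..?M}"
    using \<open>?M \<le> N\<close> by auto
  finally show ?thesis
    by simp
qed

definition shifted_prod :: "nat \<Rightarrow> nat \<Rightarrow> nat" where
  "shifted_prod m n = (\<Prod>j\<in>{1..<m}. \<Prod>i\<in>{1..j}. 2*n + i + j)"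

lemma multiplicity_shifted_prod:
  assumes "prime p" "2*n + 2*m \<le> N"
  shows "int (multiplicity p (shifted_prod m n)) =
    (\<Sum>k\<in>{1..N}. \<Sum>j\<in>{1..<m}. int ((2*n + 2*j) div p^k) - int ((2*n + j) div p^k))"
proof -
  have pe: "prime_elem p"
    using assms(1) by simp
  have "multiplicity p (shifted_prod m n) = (\<Sum>j\<in>{1..<m}. multiplicity p (\<Prod>i\<in>{1..j}. 2*n + i + j))"
    unfolding shifted_prod_def by (rule prime_elem_multiplicity_prod_distrib[OF pe]) auto
  also have "\<dots> = (\<Sum>j\<in>{1..<m}. \<Sum>i\<in>{1..j}. multiplicity p (2*n + i + j))"
    by (intro sum.cong refl prime_elem_multiplicity_prod_distrib[OF pe]) auto
  finally have "int (multiplicity p (shifted_prod m n)) =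
      (\<Sum>j\<in>{1..<m}. \<Sum>i\<in>{1..j}. int (multiplicity p (2*n + i + j)))"
    by (simp add: of_nat_sum)
  also have "\<dots> = (\<Sum>j\<in>{1..<m}. \<Sum>i\<in>{1..j}. \<Sum>k\<in>{1..N}. if p^k dvd 2*n + i + j then 1 else 0)"
    using assms by (intro sum.cong refl multiplicity_eq_sum_pow_dvd) auto
  also have "\<dots> = (\<Sum>k\<in>{1..N}. \<Sum>j\<in>{1..<m}. \<Sum>i\<in>{1..j}. if p^k dvd (2*n + j) + i then 1 else 0)"
    by (subst sum.swap) (simp add: add_ac, rule sum.swap)
  also have "\<dots> = (\<Sum>k\<in>{1..N}. \<Sum>j\<in>{1..<m}. int ((2*n + 2*j) div p^k) - int ((2*n + j) div p^k))"
    using prime_gt_0_nat[OF assms(1)]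
    by (intro sum.cong refl, subst sum_dvd_indicator_eq_div_diff) (simp_all add: mult_2 add.assoc)
  finally show ?thesis .
qed

lemma multiplicity_shifted_prod_diff:
  assumes "prime p"
  shows "int (multiplicity p (shifted_prod m n)) - int (multiplicity p (shifted_prod m 0)) =
    (\<Sum>k\<in>{1..2*n + 2*m}. defect_sum (p^k) (m - 1) n)"
proof -
  have "{1..<m} = {1..m - 1}"
    by auto
  then show ?thesis
    using assms
    by (simp add: multiplicity_shifted_prod[where N = "2*n + 2*m"] flip: sum_subtractf)
       (simp add: defect_sum_def defect_def algebra_simps)
qed

lemma shifted_prod_pos: "0 < shifted_prod m n"
  by (simp add: shifted_prod_def)

lemma shifted_prod_dvd: "shifted_prod m 0 dvd shifted_prod m n"
proof (rule multiplicity_le_imp_dvd)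
  show "shifted_prod m 0 \<noteq> 0"
    using shifted_prod_pos by (metis less_irrefl)
  show "multiplicity p (shifted_prod m 0) \<le> multiplicity p (shifted_prod m n)" if "prime p" for p
    using multiplicity_shifted_prod_diff[OF that, of m n] prime_gt_0_nat[OF that]
      sum_nonneg[of "{1..2*n + 2*m}" "\<lambda>k. defect_sum (p^k) (m - 1) n"] defect_sum_nonneg
    by simp
qed

lemma catalan_hankel_prod_eq_quotient:
  "catalan_hankel_prod m n = of_nat (shifted_prod m n div shifted_prod m 0)"
proof -
  have "catalan_hankel_prod m n = of_nat (shifted_prod m n) / of_nat (shifted_prod m 0)"
    by (simp add: catalan_hankel_prod_def shifted_prod_def prod_dividef)
  moreover obtain c where "shifted_prod m n = shifted_prod m 0 * c"
    using shifted_prod_dvd by blast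
  ultimately show ?thesis
    using shifted_prod_pos[of m 0] by simp
qed

lemma odd_div_iff_multiplicity_eq:
  fixes a b :: nat
  assumes "b dvd a" "a \<noteq> 0"
  shows "odd (a div b) \<longleftrightarrow> multiplicity 2 a = multiplicity 2 b"
proof -
  have "a = b * (a div b)" "b \<noteq> 0" "a div b \<noteq> 0"
    using assms by auto
  then have "multiplicity 2 a = multiplicity 2 b + multiplicity 2 (a div b)"
    by (metis prime_elem_multiplicity_mult_distrib prime_elem_nat_iff prime_nat_iff two_is_prime_nat)
  moreover have "multiplicity 2 (a div b) = 0 \<longleftrightarrow> odd (a div b)"
    using \<open>a div b \<noteq> 0\<close> by (simp add: multiplicity_eq_zero_iff)
  ultimately show ?thesis
    by linarith
qed

lemma odd_shifted_prod_quotient_iff: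
  "odd (shifted_prod m n div shifted_prod m 0) \<longleftrightarrow> (\<forall>k\<in>{1..2*n + 2*m}. defect_sum (2^k) (m - 1) n = 0)"
proof -
  have "odd (shifted_prod m n div shifted_prod m 0) \<longleftrightarrow>
      multiplicity 2 (shifted_prod m n) = multiplicity 2 (shifted_prod m 0)"
    using shifted_prod_pos[of m n] by (simp add: odd_div_iff_multiplicity_eq shifted_prod_dvd)
  also have "\<dots> \<longleftrightarrow> (\<Sum>k\<in>{1..2*n + 2*m}. defect_sum (2^k) (m - 1) n) = 0"
    using multiplicity_shifted_prod_diff[OF two_is_prime_nat, of m n]
    by (metis eq_iff_diff_eq_0 of_nat_eq_iff)
  also have "\<dots> \<longleftrightarrow> (\<forall>k\<in>{1..2*n + 2*m}. defect_sum (2^k) (m - 1) n = 0)"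
    by (simp add: sum_nonneg_eq_0_iff defect_sum_nonneg)
  finally show ?thesis .
qed

lemma ex_odd_of_int_eq_of_nat_iff:
  "(\<exists>k::int. of_int k = (of_nat c :: 'a :: ring_char_0) \<and> odd k) \<longleftrightarrow> odd c"
proof -
  have "of_int k = (of_nat c :: 'a) \<longleftrightarrow> k = int c" for k
    by (metis of_int_eq_iff of_int_of_nat_eq)
  then show ?thesis
    by auto
qed

lemma cong_int_neg_iff_dvd: "[int n = - int m] (mod int q) \<longleftrightarrow> q dvd n + m"
proof -
  have "int n - - int m = int (n + m)"
    by simp
  then show ?thesis
    unfolding cong_iff_dvd_diff by (simp only: int_dvd_int_iff)
qed

theorem corollary3p2:
  fixes m n K :: nat
  assumes "2 ^ K < m" and "m \<le> 2 ^ (K + 1)"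
  shows "(\<exists>k::int. of_int k = catalan_hankel_prod m n \<and> odd k) \<longleftrightarrow>
         ([int n = 0] (mod 2 ^ (K + 1)) \<or> [int n = - int m] (mod 2 ^ (K + 1)))"
proof -
  have "K + 2 \<le> 2*n + 2*m"
    using assms(1) less_exp[of K] by linarith
  then have "odd (shifted_prod m n div shifted_prod m 0) \<longleftrightarrow> 2^(K+1) dvd n \<or> 2^(K+1) dvd n + m"
    unfolding odd_shifted_prod_quotient_iff by (rule defect_sums_pow2_eq_0_iff[OF assms])
  moreover have "[int n = 0] (mod 2 ^ (K + 1)) \<longleftrightarrow> 2^(K+1) dvd n"
    using cong_0_iff[of "int n" "int (2^(K+1))"] int_dvd_int_iff[of "2^(K+1)" n] by simp
  moreover have "[int n = - int m] (mod 2 ^ (K + 1)) \<longleftrightarrow> 2^(K+1) dvd n + m"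
    using cong_int_neg_iff_dvd[of n m "2^(K+1)"] by simp
  ultimately show ?thesis
    by (simp add: catalan_hankel_prod_eq_quotient ex_odd_of_int_eq_of_nat_iff)
qed

end
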